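(* Let $s,u>0$ and $\nu_0=0$. For $\gamma>0$ let $\bar y_2(s,\gamma,u)=\frac12\big(1+\frac s\gamma-\sqrt{(1+s/\gamma)^2-4u/\gamma}\big)$. Then $$\lim_{\gamma\to0}\bar y_2(s,\gamma,u)=\frac us .$$ Moreover, denoting by $y_\infty(y_0,s,\gamma,u)=\lim_{t\to\infty}y(t;y_0)$ the long-term limit of the solution of $\dot y=-y(1-y)[s+\gamma(1-y)]+u(1-y)$, $y(0)=y_0\in[0,1]$, we have $$\lim_{\gamma\to0}y_\infty(y_0,s,\gamma,u)=\begin{cases}\min\{u/s,1\}, & y_0\in[0,1),\\ 1, & y_0=1.\end{cases}$$ *)

theory Defs
  imports Complex_Main
begin

definition ybar2 :: "real \<Rightarrow> real \<Rightarrow> real \<Rightarrow> real" where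
  "ybar2 s \<gamma> u = 1/2 * (1 + s/\<gamma> - sqrt ((1 + s/\<gamma>)^2 - 4*u/\<gamma>))"

definition odeF :: "real \<Rightarrow> real \<Rightarrow> real \<Rightarrow> real \<Rightarrow> real" where
  "odeF s \<gamma> u y = - y * (1 - y) * (s + \<gamma> * (1 - y)) + u * (1 - y)"

definition is_solution :: "real \<Rightarrow> real \<Rightarrow> real \<Rightarrow> real \<Rightarrow> (real \<Rightarrow> real) \<Rightarrow> bool" where
  "is_solution s \<gamma> u y0 y \<longleftrightarrow> y 0 = y0 \<and>
     (\<forall>t\<ge>0. (y has_real_derivative odeF s \<gamma> u (y t)) (at t within {0..}))"

definition y_infty :: "(real \<Rightarrow> real) \<Rightarrow> real" where
  "y_infty y = Lim at_top y"

end

(*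
  The right-hand side factors as (1 - y) q(y) with q(y) = gamma y^2 - (s + gamma) y + u, whose
  smaller root is ybar2; rationalising, ybar2 = 2u / ((gamma + s) + sqrt ((gamma + s)^2 - 4 u gamma)),
  which tends to u/s.

  The equation is scalar, autonomous and locally Lipschitz, so a Gronwall estimate for (y - e)^2
  shows that a trajectory never reaches an equilibrium e it did not start at. It is therefore
  trapped between consecutive equilibria, moves monotonically, and converges to the attracting
  one. If u < s then q(1) = u - s < 0 separates the roots, ybar2 < 1 < ybar1, and every y0 < 1 is
  attracted to ybar2 (for every gamma > 0). If u >= s and gamma < s then q > 0 below 1, so every
  y0 < 1 is attracted to 1. Finally y0 = 1 is an equilibrium.
*)
theory Submission
  imports Defs "HOL-Analysis.Analysis"
begin

definition autonomous_solution :: "(real \<Rightarrow> real) \<Rightarrow> (real \<Rightarrow> real) \<Rightarrow> bool" where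
  "autonomous_solution F y \<longleftrightarrow> (\<forall>t\<ge>0. (y has_real_derivative F (y t)) (at t within {0..}))"

lemma diff_ge_of_deriv_ge:
  fixes f f' :: "real \<Rightarrow> real"
  assumes "a \<le> b"
    and deriv: "\<And>x. x \<in> {a..b} \<Longrightarrow> (f has_real_derivative f' x) (at x within {a..b})"
    and bound: "\<And>x. x \<in> {a..b} \<Longrightarrow> m \<le> f' x"
  shows "m * (b - a) \<le> f b - f a"
proof -
  obtain x where x: "x \<in> {a..b}" "f b - f a = f' x * (b - a)"
    using mvt_very_simple[of a b f "\<lambda>x h. f' x * h"] assms(1) deriv
    unfolding has_field_derivative_def by auto
  show ?thesis
    unfolding x(2) using bound[OF x(1)] assms(1) by (simp add: mult_right_mono)
qed

lemma gronwall_zero_iff: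
  fixes \<phi> \<phi>' :: "real \<Rightarrow> real"
  assumes "a \<le> b"
    and deriv: "\<And>x. x \<in> {a..b} \<Longrightarrow> (\<phi> has_real_derivative \<phi>' x) (at x within {a..b})"
    and bound: "\<And>x. x \<in> {a..b} \<Longrightarrow> \<bar>\<phi>' x\<bar> \<le> K * \<phi> x"
    and "0 \<le> \<phi> a" "0 \<le> \<phi> b"
  shows "\<phi> a = 0 \<longleftrightarrow> \<phi> b = 0"
proof -
  have "0 * (b - a) \<le> \<phi> b * exp (K * b) - \<phi> a * exp (K * a)"
  proof (rule diff_ge_of_deriv_ge[OF \<open>a \<le> b\<close>])
    fix x assume x: "x \<in> {a..b}"
    show "((\<lambda>x. \<phi> x * exp (K * x)) has_real_derivative (\<phi>' x + K * \<phi> x) * exp (K * x))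
        (at x within {a..b})"
      by (rule derivative_eq_intros deriv[OF x] refl | simp add: algebra_simps)+
    show "0 \<le> (\<phi>' x + K * \<phi> x) * exp (K * x)"
      using bound[OF x] by simp
  qed
  then have grow: "\<phi> a * exp (K * a) \<le> \<phi> b * exp (K * b)" by simp
  have "0 * (b - a) \<le> - \<phi> b * exp (- K * b) - - \<phi> a * exp (- K * a)"
  proof (rule diff_ge_of_deriv_ge[OF \<open>a \<le> b\<close>])
    fix x assume x: "x \<in> {a..b}"
    show "((\<lambda>x. - \<phi> x * exp (- K * x)) has_real_derivative (K * \<phi> x - \<phi>' x) * exp (- K * x))
        (at x within {a..b})"
      by (rule derivative_eq_intros deriv[OF x] refl | simp add: algebra_simps)+
    show "0 \<le> (K * \<phi> x - \<phi>' x) * exp (- K * x)"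
      using bound[OF x] by simp
  qed
  then have decay: "\<phi> b * exp (- K * b) \<le> \<phi> a * exp (- K * a)" by simp
  show ?thesis
    using grow decay assms(4,5) by (auto simp: mult_le_0_iff)
qed

lemma autonomous_solution_continuous:
  "autonomous_solution F y \<Longrightarrow> continuous_on {0..} y"
  unfolding autonomous_solution_def by (rule DERIV_continuous_on) auto

lemma autonomous_solution_deriv_within:
  assumes "autonomous_solution F y" "0 \<le> a" "x \<in> {a..b}"
  shows "(y has_real_derivative F (y x)) (at x within {a..b})"
proof (rule DERIV_subset)
  show "(y has_real_derivative F (y x)) (at x within {0..})"
    using assms unfolding autonomous_solution_def by auto
qed (use assms in auto)

lemma autonomous_solution_reflect:
  "autonomous_solution F y \<Longrightarrow> autonomous_solution (\<lambda>x. - F (- x)) (\<lambda>t. - y t)"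
  unfolding autonomous_solution_def by (auto intro!: derivative_eq_intros)

lemma autonomous_solution_equilibrium_iff:
  assumes sol: "autonomous_solution F y"
    and F: "\<And>x. F x = (x - e) * Q x" and Q: "continuous_on UNIV Q"
    and "0 \<le> a" "a \<le> b"
  shows "y a = e \<longleftrightarrow> y b = e"
proof -
  have "continuous_on {a..b} y"
    by (rule continuous_on_subset[OF autonomous_solution_continuous[OF sol]])
      (use \<open>0 \<le> a\<close> in auto)
  then have "continuous_on {a..b} (\<lambda>x. Q (y x))"
    by (rule continuous_on_compose2[OF Q]) auto
  then have "bounded ((\<lambda>x. Q (y x)) ` {a..b})"
    by (intro compact_imp_bounded compact_continuous_image compact_Icc)
  then obtain K where K: "\<And>x. x \<in> {a..b} \<Longrightarrow> \<bar>Q (y x)\<bar> \<le> K"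
    unfolding bounded_real by blast
  have "(y a - e)\<^sup>2 = 0 \<longleftrightarrow> (y b - e)\<^sup>2 = 0"
  proof (rule gronwall_zero_iff[OF \<open>a \<le> b\<close>])
    fix x assume x: "x \<in> {a..b}"
    show "((\<lambda>x. (y x - e)\<^sup>2) has_real_derivative 2 * (y x - e) * F (y x)) (at x within {a..b})"
      by (rule derivative_eq_intros autonomous_solution_deriv_within[OF sol \<open>0 \<le> a\<close> x] refl
          | simp)+
    have "2 * (y x - e) * F (y x) = 2 * (y x - e)\<^sup>2 * Q (y x)"
      by (simp add: F power2_eq_square)
    then have "\<bar>2 * (y x - e) * F (y x)\<bar> = 2 * (y x - e)\<^sup>2 * \<bar>Q (y x)\<bar>"
      by (simp add: abs_mult)
    also have "\<dots> \<le> 2 * K * (y x - e)\<^sup>2"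
      using mult_left_mono[OF K[OF x], of "2 * (y x - e)\<^sup>2"] by (simp add: algebra_simps)
    finally show "\<bar>2 * (y x - e) * F (y x)\<bar> \<le> 2 * K * (y x - e)\<^sup>2" .
  qed auto
  then show ?thesis by simp
qed

lemma autonomous_solution_below_equilibrium:
  assumes sol: "autonomous_solution F y"
    and F: "\<And>x. F x = (x - e) * Q x" and Q: "continuous_on UNIV Q"
    and "y 0 < e" "0 \<le> t"
  shows "y t < e"
proof (rule ccontr)
  assume "\<not> y t < e"
  moreover have "continuous_on {0..t} y"
    using autonomous_solution_continuous[OF sol] by (rule continuous_on_subset) auto
  ultimately obtain x where "0 \<le> x" "y x = e"
    using IVT'[of y 0 e t] assms(4,5) by auto
  then show False
    using autonomous_solution_equilibrium_iff[OF sol F Q order_refl \<open>0 \<le> x\<close>] assms(4) by simp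
qed

lemma autonomous_solution_above_equilibrium:
  assumes sol: "autonomous_solution F y"
    and F: "\<And>x. F x = (x - e) * Q x" and Q: "continuous_on UNIV Q"
    and "e < y 0" "0 \<le> t"
  shows "e < y t"
proof -
  have "- y t < - e"
  proof (rule autonomous_solution_below_equilibrium[OF autonomous_solution_reflect[OF sol]])
    show "- F (- x) = (x - - e) * Q (- x)" for x
      by (simp add: F algebra_simps)
    show "continuous_on UNIV (\<lambda>x. Q (- x))"
      by (intro continuous_on_compose2[OF Q] continuous_intros) auto
  qed (use assms(4,5) in auto)
  then show ?thesis by simp
qed

lemma autonomous_solution_mono:
  assumes sol: "autonomous_solution F y" and nonneg: "\<forall>t\<ge>0. 0 \<le> F (y t)"
    and "0 \<le> a" "a \<le> b"
  shows "y a \<le> y b"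
proof -
  have "0 * (b - a) \<le> y b - y a"
    by (rule diff_ge_of_deriv_ge[OF \<open>a \<le> b\<close> autonomous_solution_deriv_within[OF sol \<open>0 \<le> a\<close>]])
      (use nonneg \<open>0 \<le> a\<close> in auto)
  then show ?thesis by simp
qed

lemma autonomous_solution_tendsto_increasing:
  assumes sol: "autonomous_solution F y" and cont: "continuous_on UNIV F"
    and below: "\<forall>t\<ge>0. y t < c"
    and nonneg: "\<forall>t\<ge>0. 0 \<le> F (y t)"
    and pos: "\<And>x. y 0 \<le> x \<Longrightarrow> x < c \<Longrightarrow> 0 < F x"
  shows "(y \<longlongrightarrow> c) at_top"
proof (rule order_tendstoI)
  fix a assume "c < a"
  have "y t < a" if "0 \<le> t" for t
    using below that \<open>c < a\<close> by force
  then show "eventually (\<lambda>t. y t < a) at_top"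
    unfolding eventually_at_top_linorder by (intro exI[of _ 0]) simp
next
  note mono = autonomous_solution_mono[OF sol nonneg]
  fix a assume "a < c"
  have "\<exists>T\<ge>0. a < y T"
  proof (cases "a < y 0")
    case False
    then have "{y 0..a} \<noteq> {}" by simp
    then obtain xm where xm: "xm \<in> {y 0..a}" "\<forall>x\<in>{y 0..a}. F xm \<le> F x"
      using continuous_attains_inf[OF compact_Icc _ continuous_on_subset[OF cont subset_UNIV]]
      by blast
    define m where "m = F xm"
    have "0 < m" using pos xm(1) \<open>a < c\<close> unfolding m_def by auto
    define T where "T = (c - y 0) / m"
    have "0 \<le> T" using \<open>0 < m\<close> below unfolding T_def by auto
    \<comment> \<open>staying below a until T would force a speed of at least m, hence y T \<ge> c\<close>
    have "a < y T"
    proof (rule ccontr)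
      assume "\<not> a < y T"
      have "m * (T - 0) \<le> y T - y 0"
      proof (rule diff_ge_of_deriv_ge[OF \<open>0 \<le> T\<close> autonomous_solution_deriv_within[OF sol order_refl]])
        fix x assume "x \<in> {0..T}"
        then have "y x \<in> {y 0..a}" using mono[of 0 x] mono[of x T] \<open>\<not> a < y T\<close> by auto
        then show "m \<le> F (y x)" using xm(2) unfolding m_def by simp
      qed
      then have "c \<le> y T" using \<open>0 < m\<close> unfolding T_def by (simp add: field_simps)
      then show False using below \<open>0 \<le> T\<close> by force
    qed
    then show ?thesis using \<open>0 \<le> T\<close> by blast
  qed auto
  then obtain T where "0 \<le> T" "a < y T" by blast
  then have "a < y t" if "T \<le> t" for t
    using mono[of T t] that by linarith
  then show "eventually (\<lambda>t. a < y t) at_top"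
    unfolding eventually_at_top_linorder by (intro exI[of _ T]) simp
qed

lemma continuous_on_factored:
  fixes F Q :: "real \<Rightarrow> real"
  assumes "\<And>x. F x = (x - e) * Q x" and "continuous_on UNIV Q"
  shows "continuous_on UNIV F"
proof -
  have F: "F = (\<lambda>x. (x - e) * Q x)" using assms(1) by (rule ext)
  show ?thesis unfolding F by (intro continuous_intros assms(2))
qed

lemma autonomous_solution_tendsto_from_below:
  assumes sol: "autonomous_solution F y"
    and F: "\<And>x. F x = (x - e) * Q x" and Q: "continuous_on UNIV Q"
    and "y 0 < e" and pos: "\<And>x. x < e \<Longrightarrow> 0 < F x"
  shows "(y \<longlongrightarrow> e) at_top"
proof -
  have below: "\<forall>t\<ge>0. y t < e"
    using autonomous_solution_below_equilibrium[OF sol F Q \<open>y 0 < e\<close>] by blast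
  show ?thesis
    by (rule autonomous_solution_tendsto_increasing[OF sol continuous_on_factored[OF F Q] below])
      (use below pos in \<open>auto intro: less_imp_le\<close>)
qed

lemma autonomous_solution_tendsto_from_above:
  assumes sol: "autonomous_solution F y"
    and F: "\<And>x. F x = (x - e) * Q x" and Q: "continuous_on UNIV Q"
    and G: "\<And>x. F x = (x - c) * P x" and P: "continuous_on UNIV P"
    and "e < y 0" "y 0 < c" and neg: "\<And>x. e < x \<Longrightarrow> x < c \<Longrightarrow> F x < 0"
  shows "(y \<longlongrightarrow> e) at_top"
proof -
  have above: "\<forall>t\<ge>0. e < y t"
    using autonomous_solution_above_equilibrium[OF sol F Q \<open>e < y 0\<close>] by blast
  have below: "\<forall>t\<ge>0. y t < c"
    using autonomous_solution_below_equilibrium[OF sol G P \<open>y 0 < c\<close>] by blast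
  have "continuous_on UNIV (\<lambda>x. - F (- x))"
    by (intro continuous_on_compose2[OF continuous_on_factored[OF F Q]] continuous_intros) auto
  then have "((\<lambda>t. - y t) \<longlongrightarrow> - e) at_top"
    by (rule autonomous_solution_tendsto_increasing[OF autonomous_solution_reflect[OF sol]])
      (use above below neg in \<open>auto intro: less_imp_le\<close>)
  then show ?thesis by (rule tendsto_minus_cancel)
qed

lemma autonomous_solution_tendsto_from_equilibrium:
  assumes sol: "autonomous_solution F y"
    and F: "\<And>x. F x = (x - e) * Q x" and Q: "continuous_on UNIV Q"
    and "y 0 = e"
  shows "(y \<longlongrightarrow> e) at_top"
proof (rule tendsto_eventually)
  show "\<forall>\<^sub>F t in at_top. y t = e"
    using autonomous_solution_equilibrium_iff[OF sol F Q order_refl] \<open>y 0 = e\<close>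
    unfolding eventually_at_top_linorder by blast
qed

lemma y_infty_eqI: "(y \<longlongrightarrow> c) at_top \<Longrightarrow> y_infty y = c"
  unfolding y_infty_def by (rule tendsto_Lim) simp

lemma is_solution_iff:
  "is_solution s \<gamma> u y0 y \<longleftrightarrow> y 0 = y0 \<and> autonomous_solution (odeF s \<gamma> u) y"
  unfolding is_solution_def autonomous_solution_def by simp

lemma odeF_eq_quadratic: "odeF s \<gamma> u x = (x - 1) * - (\<gamma> * x\<^sup>2 - (s + \<gamma>) * x + u)"
  unfolding odeF_def by (simp add: algebra_simps power2_eq_square)

definition ybar1 :: "real \<Rightarrow> real \<Rightarrow> real \<Rightarrow> real" where
  "ybar1 s \<gamma> u = 1/2 * (1 + s/\<gamma> + sqrt ((1 + s/\<gamma>)^2 - 4*u/\<gamma>))"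

lemma ybar2_le_ybar1:
  "0 \<le> (1 + s/\<gamma>)^2 - 4*u/\<gamma> \<Longrightarrow> ybar2 s \<gamma> u \<le> ybar1 s \<gamma> u"
  unfolding ybar1_def ybar2_def by simp

lemma quadratic_eq_ybar:
  assumes "0 < \<gamma>" and "0 \<le> (1 + s/\<gamma>)^2 - 4*u/\<gamma>"
  shows "\<gamma> * x\<^sup>2 - (s + \<gamma>) * x + u = \<gamma> * (x - ybar2 s \<gamma> u) * (x - ybar1 s \<gamma> u)"
proof -
  have "(sqrt ((1 + s/\<gamma>)^2 - 4*u/\<gamma>))\<^sup>2 = (1 + s/\<gamma>)^2 - 4*u/\<gamma>"
    using assms(2) by simp
  then show ?thesis
    using assms(1) unfolding ybar1_def ybar2_def by (simp add: field_simps power2_eq_square)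
qed

lemma ybar_discriminant_pos:
  fixes s \<gamma> u :: real
  assumes "0 < \<gamma>" "u < s"
  shows "0 < (1 + s/\<gamma>)^2 - 4*u/\<gamma>"
proof -
  have "0 \<le> (1 - s/\<gamma>)^2" by simp
  also have "\<dots> = (1 + s/\<gamma>)^2 - 4 * s/\<gamma>" by (simp add: power2_eq_square algebra_simps)
  also have "\<dots> < (1 + s/\<gamma>)^2 - 4*u/\<gamma>" using assms by (simp add: divide_strict_right_mono)
  finally show ?thesis .
qed

lemma ybar2_lt_one_lt_ybar1:
  assumes "0 < \<gamma>" "u < s"
  shows "ybar2 s \<gamma> u < 1" "1 < ybar1 s \<gamma> u"
proof -
  \<comment> \<open>the quadratic is u - s < 0 at 1, so 1 separates its roots\<close>
  note disc = less_imp_le[OF ybar_discriminant_pos[OF assms]]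
  have "\<gamma> * (1 - ybar2 s \<gamma> u) * (1 - ybar1 s \<gamma> u) < 0"
    using quadratic_eq_ybar[OF \<open>0 < \<gamma>\<close> disc, of 1] assms by simp
  then show "ybar2 s \<gamma> u < 1" "1 < ybar1 s \<gamma> u"
    using ybar2_le_ybar1[OF disc] \<open>0 < \<gamma>\<close>
    by (auto simp: mult_less_0_iff zero_less_mult_iff)
qed

lemma y_infty_from_one:
  assumes "is_solution s \<gamma> u 1 y"
  shows "y_infty y = 1"
proof (rule y_infty_eqI, rule autonomous_solution_tendsto_from_equilibrium[OF _ odeF_eq_quadratic])
  show "autonomous_solution (odeF s \<gamma> u) y" "y 0 = 1"
    using assms by (auto simp: is_solution_iff)
  show "continuous_on UNIV (\<lambda>x. - (\<gamma> * x\<^sup>2 - (s + \<gamma>) * x + u))"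
    by (intro continuous_intros)
qed

lemma y_infty_of_le:
  assumes "0 < \<gamma>" "\<gamma> < s" "s \<le> u" "y0 < 1" and sol: "is_solution s \<gamma> u y0 y"
  shows "y_infty y = 1"
proof (rule y_infty_eqI, rule autonomous_solution_tendsto_from_below[OF _ odeF_eq_quadratic])
  show "autonomous_solution (odeF s \<gamma> u) y" "y 0 < 1"
    using sol \<open>y0 < 1\<close> by (auto simp: is_solution_iff)
  show "continuous_on UNIV (\<lambda>x. - (\<gamma> * x\<^sup>2 - (s + \<gamma>) * x + u))"
    by (intro continuous_intros)
  fix x :: real assume "x < 1"
  have "\<gamma> * x < s"
    using \<open>0 < \<gamma>\<close> \<open>\<gamma> < s\<close> \<open>x < 1\<close> mult_strict_left_mono[of x 1 \<gamma>] by linarith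
  then have "0 < (1 - x) * (s - \<gamma> * x)" using \<open>x < 1\<close> by simp
  also have "\<dots> \<le> \<gamma> * x\<^sup>2 - (s + \<gamma>) * x + u"
    using \<open>s \<le> u\<close> by (simp add: algebra_simps power2_eq_square)
  finally show "0 < odeF s \<gamma> u x" unfolding odeF_eq_quadratic using \<open>x < 1\<close> by (simp add: mult_neg_neg)
qed

lemma y_infty_of_lt:
  assumes "0 < \<gamma>" "u < s" "y0 < 1" and sol: "is_solution s \<gamma> u y0 y"
  shows "y_infty y = ybar2 s \<gamma> u"
proof -
  define r r' where "r = ybar2 s \<gamma> u" and "r' = ybar1 s \<gamma> u"
  have "r < 1" "1 < r'"
    unfolding r_def r'_def using ybar2_lt_one_lt_ybar1[OF \<open>0 < \<gamma>\<close> \<open>u < s\<close>] by auto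
  have ode: "autonomous_solution (odeF s \<gamma> u) y" and "y 0 = y0"
    using sol by (auto simp: is_solution_iff)
  have F: "odeF s \<gamma> u x = (x - r) * (\<gamma> * (1 - x) * (x - r'))" for x
  proof -
    have "odeF s \<gamma> u x = (x - 1) * - (\<gamma> * (x - r) * (x - r'))"
      unfolding odeF_eq_quadratic r_def r'_def
      using quadratic_eq_ybar[OF \<open>0 < \<gamma>\<close> less_imp_le[OF ybar_discriminant_pos[OF \<open>0 < \<gamma>\<close> \<open>u < s\<close>]]]
      by (simp only:)
    then show ?thesis by (simp add: algebra_simps)
  qed
  have Q: "continuous_on UNIV (\<lambda>x. \<gamma> * (1 - x) * (x - r'))"
    by (intro continuous_intros)
  have Q_neg: "\<gamma> * (1 - x) * (x - r') < 0" if "x < 1" for x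
    using that \<open>1 < r'\<close> \<open>0 < \<gamma>\<close> by (simp add: mult_pos_neg)
  consider "y0 = r" | "y0 < r" | "r < y0" by linarith
  then have "(y \<longlongrightarrow> r) at_top"
  proof cases
    case 1
    then show ?thesis
      using autonomous_solution_tendsto_from_equilibrium[OF ode F Q] \<open>y 0 = y0\<close> by simp
  next
    case 2
    show ?thesis
    proof (rule autonomous_solution_tendsto_from_below[OF ode F Q])
      show "0 < odeF s \<gamma> u x" if "x < r" for x
        unfolding F using that \<open>r < 1\<close> Q_neg[of x] by (simp add: mult_neg_neg)
    qed (use 2 \<open>y 0 = y0\<close> in simp)
  next
    case 3
    show ?thesis
    proof (rule autonomous_solution_tendsto_from_above[OF ode F Q odeF_eq_quadratic])
      show "odeF s \<gamma> u x < 0" if "r < x" "x < 1" for x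
        unfolding F using that Q_neg[of x] by (simp add: mult_pos_neg)
      show "continuous_on UNIV (\<lambda>x. - (\<gamma> * x\<^sup>2 - (s + \<gamma>) * x + u))"
        by (intro continuous_intros)
    qed (use 3 \<open>y 0 = y0\<close> \<open>y0 < 1\<close> in auto)
  qed
  then show ?thesis unfolding r_def by (rule y_infty_eqI)
qed

lemma y_infty_eq:
  assumes "0 < \<gamma>" "\<gamma> < s" "y0 \<le> 1" "is_solution s \<gamma> u y0 y"
  shows "y_infty y = (if y0 < 1 \<and> u < s then ybar2 s \<gamma> u else 1)"
  using assms y_infty_from_one[of s \<gamma> u y] y_infty_of_le[of \<gamma> s u y0 y] y_infty_of_lt[of \<gamma> u s y0 y]
  by (cases "y0 < 1"; cases "u < s") auto

lemma ybar2_eq_rationalized: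
  assumes "0 < \<gamma>" "0 < s" "0 \<le> (\<gamma> + s)\<^sup>2 - 4*u*\<gamma>"
  shows "ybar2 s \<gamma> u = 2*u / ((\<gamma> + s) + sqrt ((\<gamma> + s)\<^sup>2 - 4*u*\<gamma>))"
proof -
  define S where "S = sqrt ((\<gamma> + s)\<^sup>2 - 4*u*\<gamma>)"
  have S: "0 \<le> S" "S\<^sup>2 = (\<gamma> + s)\<^sup>2 - 4*u*\<gamma>" using assms unfolding S_def by auto
  have "(1 + s/\<gamma>)^2 - 4*u/\<gamma> = ((\<gamma> + s)\<^sup>2 - 4*u*\<gamma>) / \<gamma>\<^sup>2"
    using assms by (simp add: field_simps power2_eq_square)
  then have "sqrt ((1 + s/\<gamma>)^2 - 4*u/\<gamma>) = S / \<gamma>"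
    using assms by (simp add: S_def real_sqrt_divide)
  then have "ybar2 s \<gamma> u = ((\<gamma> + s) - S) / (2*\<gamma>)"
    unfolding ybar2_def using assms by (simp add: field_simps)
  also have "\<dots> = 2*u / ((\<gamma> + s) + S)"
    using assms S by (simp add: field_simps power2_eq_square add_pos_nonneg)
  finally show ?thesis unfolding S_def .
qed

lemma ybar2_tendsto:
  assumes "0 < s"
  shows "((\<lambda>\<gamma>. ybar2 s \<gamma> u) \<longlongrightarrow> u / s) (at_right 0)"
proof -
  have disc: "((\<lambda>\<gamma>. (\<gamma> + s)\<^sup>2 - 4*u*\<gamma>) \<longlongrightarrow> s\<^sup>2) (at_right 0)"
    by (rule tendsto_eq_intros refl | simp)+
  have "\<forall>\<^sub>F \<gamma> in at_right 0. 0 < (\<gamma> + s)\<^sup>2 - 4*u*\<gamma>"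
    using order_tendstoD(1)[OF disc, of 0] assms by simp
  moreover have "\<forall>\<^sub>F \<gamma> in at_right 0. (0::real) < \<gamma>"
    by (rule eventually_at_right_less)
  ultimately have "\<forall>\<^sub>F \<gamma> in at_right 0. 2*u / ((\<gamma> + s) + sqrt ((\<gamma> + s)\<^sup>2 - 4*u*\<gamma>)) = ybar2 s \<gamma> u"
    by eventually_elim (use assms in \<open>simp add: ybar2_eq_rationalized\<close>)
  moreover have "((\<lambda>\<gamma>. 2*u / ((\<gamma> + s) + sqrt ((\<gamma> + s)\<^sup>2 - 4*u*\<gamma>))) \<longlongrightarrow> 2*u / (s + sqrt (s\<^sup>2)))
      (at_right 0)"
    using assms by (intro tendsto_intros disc) (auto intro: tendsto_eq_intros)
  ultimately show ?thesis
    using assms by (simp add: Lim_transform_eventually)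
qed

theorem proposition3p1:
  fixes s u y0 :: real and Y :: "real \<Rightarrow> real \<Rightarrow> real"
  assumes "s > 0" and "u > 0" and "y0 \<in> {0..1}"
    and "\<forall>\<gamma>>0. is_solution s \<gamma> u y0 (Y \<gamma>)"
  shows "((\<lambda>\<gamma>. ybar2 s \<gamma> u) \<longlongrightarrow> u / s) (at_right 0) \<and>
         ((\<lambda>\<gamma>. y_infty (Y \<gamma>)) \<longlongrightarrow> (if y0 < 1 then min (u / s) 1 else 1)) (at_right 0)"
proof
  show ybar2_lim: "((\<lambda>\<gamma>. ybar2 s \<gamma> u) \<longlongrightarrow> u / s) (at_right 0)"
    using ybar2_tendsto[OF \<open>s > 0\<close>] .
  have "((\<lambda>\<gamma>. if y0 < 1 \<and> u < s then ybar2 s \<gamma> u else 1)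
      \<longlongrightarrow> (if y0 < 1 then min (u / s) 1 else 1)) (at_right 0)"
  proof (cases "y0 < 1 \<and> u < s")
    case True
    then have "min (u / s) 1 = u / s" using \<open>s > 0\<close> by simp
    then show ?thesis using True ybar2_lim by simp
  next
    case False
    then have "(if y0 < 1 then min (u / s) 1 else 1) = 1"
      using \<open>s > 0\<close> by (auto simp: min_def le_divide_eq)
    then show ?thesis unfolding if_not_P[OF False] by simp
  qed
  moreover have "\<forall>\<^sub>F \<gamma> in at_right 0. (if y0 < 1 \<and> u < s then ybar2 s \<gamma> u else 1) = y_infty (Y \<gamma>)"
    unfolding eventually_at_right_field
    using \<open>s > 0\<close> assms(3,4) y_infty_eq[of _ s y0 u] by (intro exI[of _ s]) auto
  ultimately show "((\<lambda>\<gamma>. y_infty (Y \<gamma>)) \<longlongrightarrow> (if y0 < 1 then min (u / s) 1 else 1)) (at_right 0)"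
    by (rule Lim_transform_eventually)
qed

end
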